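(* Let $p\ge 2$ be an integer which is not a prime, not twice an odd prime, not $4$ and not $9$. Then $\#_p<\lfloor p/2\rfloor$.
   Context: $\#_p$ denotes the number of squares in the ring $\mathbb Z/p\mathbb Z$, i.e. the cardinality of $\{n^2 \bmod p : n\in\mathbb Z\}$. *)

theory Defs
  imports "HOL-Computational_Algebra.Primes"
begin

definition num_squares :: "int \<Rightarrow> nat" where
  "num_squares p = card {(n^2) mod p | n :: int. True}"

end

theory Submission
  imports Defs
begin

text \<open>Since n and p - n have the same square modulo p, every square is the square of some
  n \<in> {0..p div 2}, so there are at most p div 2 + 1 of them.  For each composite p outside the
  listed exceptions we exhibit two elements of {0..p div 2} whose squares are also squares of
  other elements of that range; this costs two squares and gives the bound.  The collisions come
  from differences of squares that are multiples of p: e.g. for p = ab with a, b odd,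
  ((a+b)/2)^2 - ((b-a)/2)^2 = p and ((3a+b)/2)^2 - ((b-3a)/2)^2 = 3p.\<close>

lemma card_image_le_card_Diff:
  assumes "finite A" "B \<subseteq> A" "\<And>x. x \<in> B \<Longrightarrow> \<exists>y \<in> A - B. f y = f x"
  shows "card (f ` A) \<le> card A - card B"
proof -
  have "f ` A \<subseteq> f ` (A - B)"
  proof
    fix z assume "z \<in> f ` A"
    then obtain x where "x \<in> A" "z = f x"
      by blast
    then show "z \<in> f ` (A - B)"
      using assms(3)[of x] by (cases "x \<in> B") (auto intro: rev_image_eqI)
  qed
  then have "card (f ` A) \<le> card (A - B)"
    using assms(1) by (meson card_image_le card_mono finite_Diff finite_imageI order_trans)
  also have "\<dots> = card A - card B"
    using assms(1,2) by (simp add: card_Diff_subset finite_subset)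
  finally show ?thesis .
qed

lemma squares_mod_eq_image_half:
  fixes p :: int
  assumes "p \<ge> 2"
  shows "{(n^2) mod p | n :: int. True} = (\<lambda>n. n^2 mod p) ` {0..p div 2}"
proof (intro equalityI subsetI)
  fix x assume "x \<in> {(n^2) mod p | n :: int. True}"
  then obtain n where x: "x = (n mod p)^2 mod p"
    by (auto simp: power_mod)
  define r where "r = n mod p"
  have r: "0 \<le> r" "r < p"
    using assms by (auto simp: r_def)
  have "(p - r)^2 mod p = r^2 mod p"
    by (simp add: mod_eq_dvd_iff power2_eq_square algebra_simps)
  then show "x \<in> (\<lambda>n. n^2 mod p) ` {0..p div 2}"
    using r unfolding x r_def[symmetric]
    by (cases "r \<le> p div 2") (auto intro!: image_eqI[of _ _ "p - r"])
qed blast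

lemma num_squares_less_half_if_collisions:
  fixes p u v u' v' :: int
  assumes "p \<ge> 2" "u \<noteq> v" "u \<in> {0..p div 2}" "v \<in> {0..p div 2}"
    and "u' \<in> {0..p div 2} - {u, v}" "v' \<in> {0..p div 2} - {u, v}"
    and "u'^2 mod p = u^2 mod p" "v'^2 mod p = v^2 mod p"
  shows "int (num_squares p) < p div 2"
proof -
  have "num_squares p = card ((\<lambda>n. n^2 mod p) ` {0..p div 2})"
    unfolding num_squares_def squares_mod_eq_image_half[OF assms(1)] ..
  also have "\<dots> \<le> card {0..p div 2} - card {u, v}"
    using assms by (intro card_image_le_card_Diff) auto
  finally show ?thesis
    using assms(1,2) by simp
qed

lemma composite_int_factor:
  fixes p :: int
  assumes "p \<ge> 2" "\<not> prime p"
  obtains a b where "2 \<le> a" "a \<le> b" "p = a * b"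
proof -
  obtain m where m: "m \<in> {2..<p}" "m dvd p"
    using assms by (auto simp: prime_int_iff')
  then obtain k where k: "p = m * k"
    by blast
  have "k \<ge> 2"
    using m k by (smt (verit) mult_less_cancel_left1 mult_nonneg_nonpos atLeastLessThan_iff)
  then show ?thesis
    using that[of m k] that[of k m] m k by (cases "m \<le> k") (auto simp: mult.commute)
qed

lemma num_squares_four_mult_less_half:
  fixes k :: int
  assumes "k \<ge> 2"
  shows "int (num_squares (4*k)) < (4*k) div 2"
proof (rule num_squares_less_half_if_collisions[of _ "2*k" "2*k - 1" 0 1])
  show "0^2 mod (4*k) = (2*k)^2 mod (4*k)"
    by (simp add: mod_eq_dvd_iff power2_eq_square)
  have "1^2 - (2*k - 1)^2 = 4*k * (1 - k)"
    by (simp add: power2_eq_square algebra_simps)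
  then show "1^2 mod (4*k) = (2*k - 1)^2 mod (4*k)"
    unfolding mod_eq_dvd_iff by (rule dvdI)
qed (use assms in auto)

lemma num_squares_twice_product_less_half:
  fixes a b :: int
  assumes "3 \<le> a" "a \<le> b"
  shows "int (num_squares (2*a*b)) < (2*a*b) div 2"
proof (rule num_squares_less_half_if_collisions[of _ "a + b" "2*a + b" "b - a" "\<bar>b - 2*a\<bar>"])
  have "2 * 1 \<le> (a - 1) * (b - 2)"
    using assms by (intro mult_mono) auto
  then have "2*a + b \<le> 2*a*b div 2"
    by (simp add: algebra_simps)
  then show "a + b \<in> {0..2*a*b div 2}" "2*a + b \<in> {0..2*a*b div 2}"
    "b - a \<in> {0..2*a*b div 2} - {a + b, 2*a + b}"
    "\<bar>b - 2*a\<bar> \<in> {0..2*a*b div 2} - {a + b, 2*a + b}" "2 \<le> 2*a*b"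
    using assms by (auto simp: abs_if)
  have "(b - a)^2 - (a + b)^2 = 2*a*b * (-2)"
    by (simp add: power2_eq_square algebra_simps)
  then show "(b - a)^2 mod (2*a*b) = (a + b)^2 mod (2*a*b)"
    unfolding mod_eq_dvd_iff by (rule dvdI)
  have "\<bar>b - 2*a\<bar>^2 - (2*a + b)^2 = 2*a*b * (-4)"
    by (simp add: power2_eq_square algebra_simps)
  then show "\<bar>b - 2*a\<bar>^2 mod (2*a*b) = (2*a + b)^2 mod (2*a*b)"
    unfolding mod_eq_dvd_iff by (rule dvdI)
qed (use assms in simp)

lemma num_squares_square_less_half:
  fixes a :: int
  assumes "4 \<le> a"
  shows "int (num_squares (a*a)) < (a*a) div 2"
proof (rule num_squares_less_half_if_collisions[of _ a "2*a" 0 0])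
  have "4*a \<le> a*a"
    using assms by (intro mult_right_mono) auto
  then have "2*a \<le> a*a div 2"
    by linarith
  then show "a \<in> {0..a*a div 2}" "2*a \<in> {0..a*a div 2}"
    "0 \<in> {0..a*a div 2} - {a, 2*a}" "2 \<le> a*a"
    using assms by auto
  show "0^2 mod (a*a) = a^2 mod (a*a)" "0^2 mod (a*a) = (2*a)^2 mod (a*a)"
    by (simp_all add: mod_eq_dvd_iff power2_eq_square)
qed (use assms in simp_all)

lemma num_squares_odd_product_less_half:
  fixes c d :: int
  assumes "1 \<le> c" "c < d"
  defines "p \<equiv> (2*c + 1) * (2*d + 1)"
  shows "int (num_squares p) < p div 2"
proof (rule num_squares_less_half_if_collisions
    [of _ "c + d + 1" "d + 3*c + 2" "d - c" "\<bar>d - 3*c - 1\<bar>"])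
  have "2*c * 2 \<le> 2*c * d"
    using assms by (intro mult_left_mono) auto
  then have "d + 3*c + 2 \<le> 2*c*d + c + d"
    using assms(1) by linarith
  moreover have "p = 2 * (2*c*d + c + d) + 1"
    unfolding p_def by (simp add: algebra_simps)
  ultimately have "d + 3*c + 2 \<le> p div 2"
    by simp
  moreover have "3 * 3 \<le> p"
    unfolding p_def using assms(1,2) by (intro mult_mono) auto
  ultimately show "c + d + 1 \<in> {0..p div 2}" "d + 3*c + 2 \<in> {0..p div 2}"
    "d - c \<in> {0..p div 2} - {c + d + 1, d + 3*c + 2}"
    "\<bar>d - 3*c - 1\<bar> \<in> {0..p div 2} - {c + d + 1, d + 3*c + 2}" "2 \<le> p"
    using assms(1,2) by (auto simp: abs_if)
  have "(d - c)^2 - (c + d + 1)^2 = p * (-1)"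
    unfolding p_def by (simp add: power2_eq_square algebra_simps)
  then show "(d - c)^2 mod p = (c + d + 1)^2 mod p"
    unfolding mod_eq_dvd_iff by (rule dvdI)
  have "\<bar>d - 3*c - 1\<bar>^2 - (d + 3*c + 2)^2 = p * (-3)"
    unfolding p_def by (simp add: power2_eq_square algebra_simps)
  then show "\<bar>d - 3*c - 1\<bar>^2 mod p = (d + 3*c + 2)^2 mod p"
    unfolding mod_eq_dvd_iff by (rule dvdI)
qed (use assms in simp)

lemma num_squares_even_less_half:
  fixes p :: int
  assumes "even p" "6 \<le> p" "\<not> (\<exists>q. prime q \<and> odd q \<and> p = 2 * q)"
  shows "int (num_squares p) < p div 2"
proof (cases "4 dvd p")
  case True
  then obtain k where "p = 4 * k" ..
  with assms(2) show ?thesis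
    using num_squares_four_mult_less_half[of k] by simp
next
  case False
  obtain m where m: "p = 2 * m"
    using assms(1) ..
  with False have "odd m"
    by auto
  with m assms(2,3) have "2 \<le> m" "\<not> prime m"
    by auto
  then obtain a b where ab: "2 \<le> a" "a \<le> b" "m = a * b"
    by (rule composite_int_factor)
  with \<open>odd m\<close> have "odd a"
    by simp
  with ab(1) have "3 \<le> a"
    by presburger
  then show ?thesis
    using num_squares_twice_product_less_half[of a b] ab m by (simp add: mult.assoc)
qed

lemma num_squares_odd_composite_less_half:
  fixes p :: int
  assumes "odd p" "2 \<le> p" "\<not> prime p" "p \<noteq> 9"
  shows "int (num_squares p) < p div 2"
proof -
  obtain a b where ab: "2 \<le> a" "a \<le> b" "p = a * b"
    using assms(2,3) by (rule composite_int_factor)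
  with assms(1) have "odd a" "odd b"
    by auto
  then obtain c d where cd: "a = 2*c + 1" "b = 2*d + 1"
    by (meson oddE)
  show ?thesis
  proof (cases "a = b")
    case True
    with ab assms(4) have "a \<noteq> 3"
      by auto
    with ab(1) \<open>odd a\<close> have "4 \<le> a"
      by presburger
    then show ?thesis
      using num_squares_square_less_half[of a] ab True by simp
  next
    case False
    with ab cd have "1 \<le> c" "c < d"
      by auto
    then show ?thesis
      using num_squares_odd_product_less_half[of c d] ab cd by simp
  qed
qed

theorem lemma4:
  fixes p :: int
  assumes "p \<ge> 2"
    and "\<not> prime p"
    and "\<not> (\<exists>q. prime q \<and> odd q \<and> p = 2 * q)"
    and "p \<noteq> 4"
    and "p \<noteq> 9"
  shows "int (num_squares p) < p div 2"
proof (cases "even p")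
  case True
  moreover have "p \<noteq> 2"
    using assms(2) by auto
  ultimately have "6 \<le> p"
    using assms(1,4) by presburger
  with True assms(3) show ?thesis
    by (intro num_squares_even_less_half)
next
  case False
  with assms(1,2,5) show ?thesis
    by (intro num_squares_odd_composite_less_half)
qed

end
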